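(* Let $\boldsymbol{\theta}$ be a parameter with real-valued treatment effect $\theta=\theta(\boldsymbol{\theta})$, $\delta\in\mathbb{R}$, $c\in(0,1)$, $\mathcal{E}=\{\theta>\delta\}$, $\bar{\mathcal{E}}=\{\theta\le\delta\}$. Let $\pi_{\mathrm{a}}$ and $\pi_{\mathrm{d}}$ be priors on $\boldsymbol{\theta}$ each giving positive probability to $\mathcal{E}$ and $\bar{\mathcal{E}}$, with $\pi_{\mathrm{a}}(\boldsymbol{\theta}\mid\mathcal{E})=\pi_{\mathrm{d}}(\boldsymbol{\theta}\mid\mathcal{E})$ and $\pi_{\mathrm{a}}(\boldsymbol{\theta}\mid\bar{\mathcal{E}})=\pi_{\mathrm{d}}(\boldsymbol{\theta}\mid\bar{\mathcal{E}})$, and let data $\mathcal{D}$ have likelihood $f(\mathcal{D}\mid\boldsymbol{\theta})$. Let $\mathcal{S}(\mathcal{D};c)=\mathbb{I}\{\Pr_{\mathrm{a}}(\mathcal{E}\mid\mathcal{D})>c\}$ and $\mathrm{PID}(c)=\Pr_{\mathrm{d}}(\bar{\mathcal{E}}\mid\mathcal{S}=1)$ under the joint model $\boldsymbol{\theta}\sim\pi_{\mathrm{d}}$, $\mathcal{D}\mid\boldsymbol{\theta}\sim f$ (assuming $\Pr_{\mathrm{d}}(\mathcal{S}=1)>0$). If $R=\frac{\Pr_{\mathrm{d}}(\mathcal{E})/\Pr_{\mathrm{d}}(\bar{\mathcal{E}})}{\Pr_{\mathrm{a}}(\mathcal{E})/\Pr_{\mathrm{a}}(\bar{\mathcal{E}})}=1$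 (which holds in particular when $\pi_{\mathrm{a}}=\pi_{\mathrm{d}}$), then $\mathrm{PID}(c)\le1-c$.
   Context: $\Pr_{\mathrm{a}}(\cdot\mid\mathcal{D})$ is the posterior under the analysis prior $\pi_{\mathrm{a}}$; $\Pr_{\mathrm{a}},\Pr_{\mathrm{d}}$ denote prior probabilities. *)

theory Defs
  imports "HOL-Probability.Probability"
begin

definition posterior :: "'p measure \<Rightarrow> ('p \<Rightarrow> 'd \<Rightarrow> real) \<Rightarrow> 'p set \<Rightarrow> 'd \<Rightarrow> real" where
  "posterior P f A x = (\<integral>t. indicator A t * f t x \<partial>P) / (\<integral>t. f t x \<partial>P)"

text \<open>Joint model: theta ~ P, data | theta ~ f(. | theta) dmu.\<close>
definition joint_model :: "'p measure \<Rightarrow> 'd measure \<Rightarrow> ('p \<Rightarrow> 'd \<Rightarrow> real) \<Rightarrow> ('p \<times> 'd) measure" where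
  "joint_model P mu f = density (P \<Otimes>\<^sub>M mu) (\<lambda>(t, x). ennreal (f t x))"

definition success :: "'p measure \<Rightarrow> ('p \<Rightarrow> 'd \<Rightarrow> real) \<Rightarrow> 'p set \<Rightarrow> real \<Rightarrow> 'd \<Rightarrow> bool" where
  "success pia f E c x \<longleftrightarrow> posterior pia f E x > c"

definition PID :: "'p measure \<Rightarrow> 'p measure \<Rightarrow> 'd measure \<Rightarrow> ('p \<Rightarrow> 'd \<Rightarrow> real) \<Rightarrow> 'p set \<Rightarrow> real \<Rightarrow> real" where
  "PID pia pid mu f E c =
     measure (joint_model pid mu f) {(t, x) \<in> space pid \<times> space mu. t \<notin> E \<and> success pia f E c x}
     / measure (joint_model pid mu f) {(t, x) \<in> space pid \<times> space mu. success pia f E c x}"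

end

(* With R = 1 the two priors give E the same mass, since equal odds force equal
   probabilities; as they also agree conditionally on E and on its complement, they
   are the same measure. For a single prior, the success set S = {Pr(E | D) > c}
   depends only on the data, and for every D in S the unnormalised posterior mass of
   the complement satisfies  int_Ebar f(D | t) dpi(t) <= (1 - c) int f(D | t) dpi(t).
   Integrating this over S against mu gives Pr(Ebar and S) <= (1 - c) Pr(S). *)

theory Submission
  imports Defs
begin

lemma odds_ratio_eq_1_imp_eq:
  fixes p q :: real
  assumes "0 < p" "p < 1" "0 < q" "q < 1" and "(q / (1 - q)) / (p / (1 - p)) = 1"
  shows "p = q"
proof -
  have "q * (1 - p) = p * (1 - q)"
    using assms by (simp add: field_simps split: if_splits)
  then show ?thesis by (simp add: algebra_simps)
qed

lemma prob_space_eqI_conditionals: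
  assumes M: "prob_space M" and N: "prob_space N" and sets_eq: "sets M = sets N"
    and B: "B \<in> sets N" and C: "C \<in> sets N"
    and disj: "B \<inter> C = {}" and cover: "B \<union> C = space N"
    and eq_B: "measure M B = measure N B"
    and pos: "0 < measure N B" "0 < measure N C"
    and cond_B: "\<forall>A \<in> sets N. measure M (A \<inter> B) / measure M B = measure N (A \<inter> B) / measure N B"
    and cond_C: "\<forall>A \<in> sets N. measure M (A \<inter> C) / measure M C = measure N (A \<inter> C) / measure N C"
  shows "M = N"
proof (rule measure_eqI[OF sets_eq])
  interpret M: prob_space M by (rule M)
  interpret N: prob_space N by (rule N)
  have "measure M (space N) = 1"
    using M.prob_space sets_eq_imp_space_eq[OF sets_eq] by simp
  then have "measure M B + measure M C = 1" "measure N B + measure N C = 1"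
    using M.finite_measure_Union[of B C] N.finite_measure_Union[of B C]
      B C disj cover sets_eq by (auto simp: N.prob_space)
  then have eq_C: "measure M C = measure N C" using eq_B by linarith
  fix A assume "A \<in> sets M"
  then have A: "A \<in> sets N" using sets_eq by simp
  have total_prob: "measure P A = measure P (A \<inter> B) + measure P (A \<inter> C)"
    if "finite_measure P" "sets P = sets N" for P
  proof -
    interpret P: finite_measure P by (rule that(1))
    have "A = (A \<inter> B) \<union> (A \<inter> C)" using cover sets.sets_into_space[OF A] by auto
    then show ?thesis
      using P.finite_measure_Union[of "A \<inter> B" "A \<inter> C"] A B C disj that(2) by auto
  qed
  have "measure M (A \<inter> B) = measure N (A \<inter> B)" using cond_B A eq_B pos by simp
  moreover have "measure M (A \<inter> C) = measure N (A \<inter> C)" using cond_C A eq_C pos by simp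
  ultimately have "measure M A = measure N A"
    using total_prob[of M] total_prob[of N] sets_eq M.finite_measure_axioms N.finite_measure_axioms by simp
  then show "emeasure M A = emeasure N A"
    by (simp add: M.emeasure_eq_measure N.emeasure_eq_measure)
qed

lemma measure_le_mult_measureI:
  assumes "emeasure M A \<le> ennreal k * emeasure M B" "emeasure M B \<noteq> \<infinity>" "0 \<le> k"
  shows "measure M A \<le> k * measure M B"
proof -
  have "ennreal k * emeasure M B \<noteq> \<infinity>"
    using assms(2) by (simp add: ennreal_mult_eq_top_iff)
  then have "emeasure M A \<noteq> \<infinity>"
    using assms(1) by (simp add: top_unique neq_top_trans)
  then have "ennreal (measure M A) \<le> ennreal (k * measure M B)"
    using assms by (simp add: emeasure_eq_ennreal_measure ennreal_mult)
  then show ?thesis using assms(3) by (simp add: ennreal_le_iff)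
qed

lemma borel_measurable_posterior:
  assumes "sigma_finite_measure P" "A \<in> sets P"
    and f[measurable]: "(\<lambda>(t, x). f t x) \<in> borel_measurable (P \<Otimes>\<^sub>M mu)"
  shows "posterior P f A \<in> borel_measurable mu"
proof -
  interpret P: sigma_finite_measure P by (rule assms(1))
  have [measurable]: "(\<lambda>(x, t). f t x) \<in> borel_measurable (mu \<Otimes>\<^sub>M P)"
    using measurable_pair_swap[OF f] by simp
  have "(\<lambda>(x, t). indicator A t * f t x) \<in> borel_measurable (mu \<Otimes>\<^sub>M P)"
    using assms(2) by (simp add: case_prod_beta')
  then show ?thesis
    unfolding posterior_def[abs_def]
    by (intro borel_measurable_divide P.borel_measurable_lebesgue_integral) simp_all
qed

lemma emeasure_joint_model_Times:
  assumes "sigma_finite_measure P" "sigma_finite_measure mu"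
    and f[measurable]: "(\<lambda>(t, x). f t x) \<in> borel_measurable (P \<Otimes>\<^sub>M mu)"
    and [measurable]: "A \<in> sets P" "S \<in> sets mu"
  shows "emeasure (joint_model P mu f) (A \<times> S) = (\<integral>\<^sup>+x\<in>S. (\<integral>\<^sup>+t\<in>A. f t x \<partial>P) \<partial>mu)"
proof -
  interpret pair_sigma_finite P mu using assms(1,2) by (simp add: pair_sigma_finite_def)
  have "emeasure (joint_model P mu f) (A \<times> S)
      = (\<integral>\<^sup>+p. ennreal (f (fst p) (snd p)) * indicator (A \<times> S) p \<partial>(P \<Otimes>\<^sub>M mu))"
    unfolding joint_model_def by (subst emeasure_density) (simp_all add: case_prod_beta')
  also have "\<dots> = (\<integral>\<^sup>+x. (\<integral>\<^sup>+t. ennreal (f t x) * indicator (A \<times> S) (t, x) \<partial>P) \<partial>mu)"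
    using nn_integral_snd[of "\<lambda>p. ennreal (f (fst p) (snd p)) * indicator (A \<times> S) p"]
    by (simp add: case_prod_beta')
  also have "\<dots> = (\<integral>\<^sup>+x\<in>S. (\<integral>\<^sup>+t\<in>A. f t x \<partial>P) \<partial>mu)"
  proof (rule nn_integral_cong)
    fix x assume "x \<in> space mu"
    then have [measurable]: "(\<lambda>t. f t x) \<in> borel_measurable P"
      using measurable_compose[OF measurable_Pair2' f] by simp
    show "(\<integral>\<^sup>+t. ennreal (f t x) * indicator (A \<times> S) (t, x) \<partial>P)
        = (\<integral>\<^sup>+t\<in>A. f t x \<partial>P) * indicator S x"
      by (subst nn_integral_multc[symmetric]) (simp_all add: indicator_times mult.assoc)
  qed
  finally show ?thesis .
qed

lemma nn_integral_compl_le_of_posterior_gt: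
  assumes A[measurable]: "A \<in> sets P" and [measurable]: "(\<lambda>t. f t x) \<in> borel_measurable P"
    and nonneg: "\<And>t. t \<in> space P \<Longrightarrow> 0 \<le> f t x"
    and c: "0 \<le> c" "c \<le> 1" and post: "c < posterior P f A x"
  shows "(\<integral>\<^sup>+t\<in>space P - A. f t x \<partial>P) \<le> ennreal (1 - c) * (\<integral>\<^sup>+t. f t x \<partial>P)"
proof -
  define I where "I = (\<integral>t. f t x \<partial>P)"
  define I_A where "I_A = (\<integral>t. indicator A t * f t x \<partial>P)"
  have post_eq: "posterior P f A x = I_A / I" unfolding posterior_def I_def I_A_def ..
  then have "I \<noteq> 0" using post c by auto
  then have int: "integrable P (\<lambda>t. f t x)" unfolding I_def using not_integrable_integral_eq by blast
  have "0 \<le> I" unfolding I_def using nonneg by (simp add: integral_nonneg)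
  with \<open>I \<noteq> 0\<close> have "0 < I" by simp
  then have "c * I < I_A" using post post_eq by (simp add: field_simps)
  have int_A: "integrable P (\<lambda>t. indicator A t * f t x)"
    using integrable_real_mult_indicator[OF A int] by (simp add: mult.commute)
  have int_compl: "integrable P (\<lambda>t. f t x * indicator (space P - A) t)"
    using integrable_real_mult_indicator[OF _ int] by simp
  have "(\<integral>t. f t x * indicator (space P - A) t \<partial>P) = (\<integral>t. f t x - indicator A t * f t x \<partial>P)"
    by (rule Bochner_Integration.integral_cong) (auto split: split_indicator)
  also have "\<dots> = I - I_A"
    unfolding I_def I_A_def using int int_A by simp
  finally have compl: "(\<integral>t. f t x * indicator (space P - A) t \<partial>P) = I - I_A" .
  have "(\<integral>\<^sup>+t\<in>space P - A. f t x \<partial>P) = (\<integral>\<^sup>+t. f t x * indicator (space P - A) t \<partial>P)"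
    by (rule nn_integral_cong) (simp split: split_indicator)
  also have "\<dots> = ennreal (I - I_A)"
    using nn_integral_eq_integral[OF int_compl] nonneg compl by simp
  also have "\<dots> \<le> ennreal ((1 - c) * I)"
    using \<open>c * I < I_A\<close> by (intro ennreal_leI) (simp add: algebra_simps)
  also have "\<dots> = ennreal (1 - c) * (\<integral>\<^sup>+t. f t x \<partial>P)"
    using nn_integral_eq_integral[OF int] nonneg c \<open>0 \<le> I\<close> unfolding I_def
    by (simp add: ennreal_mult)
  finally show ?thesis .
qed

lemma PID_le_of_same_prior:
  assumes P: "sigma_finite_measure P" and mu: "sigma_finite_measure mu"
    and E[measurable]: "E \<in> sets P"
    and f[measurable]: "(\<lambda>(t, x). f t x) \<in> borel_measurable (P \<Otimes>\<^sub>M mu)"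
    and nonneg: "\<forall>t \<in> space P. \<forall>x \<in> space mu. 0 \<le> f t x"
    and c: "0 \<le> c" "c \<le> 1"
  shows "PID P P mu f E c \<le> 1 - c"
proof -
  interpret P: sigma_finite_measure P by (rule P)
  define J where "J = joint_model P mu f"
  define S where "S = {x \<in> space mu. success P f E c x}"
  have [measurable]: "S \<in> sets mu"
    using borel_measurable_posterior[OF P E f] unfolding S_def success_def by measurable
  have section_measurable: "(\<lambda>t. f t x) \<in> borel_measurable P" if "x \<in> space mu" for x
    using measurable_compose[OF measurable_Pair2'[OF that] f] by simp
  have "emeasure J ((space P - E) \<times> S) = (\<integral>\<^sup>+x\<in>S. (\<integral>\<^sup>+t\<in>space P - E. f t x \<partial>P) \<partial>mu)"
    unfolding J_def by (rule emeasure_joint_model_Times[OF P mu f]) auto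
  also have "\<dots> \<le> (\<integral>\<^sup>+x\<in>S. ennreal (1 - c) * (\<integral>\<^sup>+t. f t x \<partial>P) \<partial>mu)"
  proof (rule nn_integral_mono)
    fix x assume x: "x \<in> space mu"
    then show "(\<integral>\<^sup>+t\<in>space P - E. f t x \<partial>P) * indicator S x
        \<le> ennreal (1 - c) * (\<integral>\<^sup>+t. f t x \<partial>P) * indicator S x"
      using nn_integral_compl_le_of_posterior_gt[where f = f and x = x, OF E section_measurable[OF x] _ c]
        nonneg by (auto simp: S_def success_def split: split_indicator)
  qed
  also have "\<dots> = ennreal (1 - c) * (\<integral>\<^sup>+x\<in>S. (\<integral>\<^sup>+t. f t x \<partial>P) \<partial>mu)"
    by (simp add: mult.assoc nn_integral_cmult)
  also have "\<dots> = ennreal (1 - c) * emeasure J (space P \<times> S)"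
    unfolding J_def emeasure_joint_model_Times[OF P mu f sets.top \<open>S \<in> sets mu\<close>] by simp
  finally have le: "emeasure J ((space P - E) \<times> S) \<le> ennreal (1 - c) * emeasure J (space P \<times> S)" .
  have "{(t, x) \<in> space P \<times> space mu. t \<notin> E \<and> success P f E c x} = (space P - E) \<times> S"
    "{(t, x) \<in> space P \<times> space mu. success P f E c x} = space P \<times> S"
    unfolding S_def by auto
  then have PID_eq: "PID P P mu f E c = measure J ((space P - E) \<times> S) / measure J (space P \<times> S)"
    unfolding PID_def J_def by simp
  show ?thesis
  proof (cases "emeasure J (space P \<times> S) = \<infinity>")
    case True
    \<comment> \<open>then \<open>measure J (space P \<times> S) = 0\<close> and \<open>PID\<close> is the junk value \<open>_ / 0 = 0\<close>\<close>
    then show ?thesis using c unfolding PID_eq by (simp add: measure_def)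
  next
    case False
    then have "measure J ((space P - E) \<times> S) \<le> (1 - c) * measure J (space P \<times> S)"
      using measure_le_mult_measureI[OF le] c by simp
    then show ?thesis using c unfolding PID_eq by (simp add: divide_le_eq)
  qed
qed

theorem corollary1:
  fixes pia pid :: "'p measure" and mu :: "'d measure"
    and theta :: "'p \<Rightarrow> real" and f :: "'p \<Rightarrow> 'd \<Rightarrow> real"
    and \<delta> c :: real and E Ebar :: "'p set"
  assumes pa: "prob_space pia" and pd: "prob_space pid"
    and sets_eq: "sets pia = sets pid"
    and mu: "sigma_finite_measure mu"
    and theta_meas: "theta \<in> borel_measurable pid"
    and c: "0 < c" "c < 1"
    and E_def: "E = {t \<in> space pid. theta t > \<delta>}"
    and Ebar_def: "Ebar = {t \<in> space pid. theta t \<le> \<delta>}"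
    and pos: "measure pia E > 0" "measure pia Ebar > 0" "measure pid E > 0" "measure pid Ebar > 0"
    and condE: "\<forall>A \<in> sets pid. measure pia (A \<inter> E) / measure pia E = measure pid (A \<inter> E) / measure pid E"
    and condEbar: "\<forall>A \<in> sets pid. measure pia (A \<inter> Ebar) / measure pia Ebar = measure pid (A \<inter> Ebar) / measure pid Ebar"
    and f_meas: "(\<lambda>(t, x). f t x) \<in> borel_measurable (pid \<Otimes>\<^sub>M mu)"
    and f_nonneg: "\<forall>t \<in> space pid. \<forall>x \<in> space mu. f t x \<ge> 0"
    and f_dens: "\<forall>t \<in> space pid. (\<integral>\<^sup>+ x. ennreal (f t x) \<partial>mu) = 1"
    and S_pos: "measure (joint_model pid mu f) {(t, x) \<in> space pid \<times> space mu. success pia f E c x} > 0"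
    and R1: "(measure pid E / measure pid Ebar) / (measure pia E / measure pia Ebar) = 1"
  shows "PID pia pid mu f E c \<le> 1 - c"
proof -
  interpret pid: prob_space pid by (rule pd)
  interpret pia: prob_space pia by (rule pa)
  have E_sets: "E \<in> sets pid" and Ebar_sets: "Ebar \<in> sets pid"
    unfolding E_def Ebar_def using theta_meas by measurable
  have Ebar_eq: "Ebar = space pid - E" unfolding E_def Ebar_def by auto
  have "measure pia Ebar = 1 - measure pia E" "measure pid Ebar = 1 - measure pid E"
    using pia.prob_compl[of E] pid.prob_compl[of E] E_sets sets_eq sets_eq_imp_space_eq[OF sets_eq]
    unfolding Ebar_eq by simp_all
  then have prior_E_eq: "measure pia E = measure pid E"
    using odds_ratio_eq_1_imp_eq[of "measure pia E" "measure pid E"] R1 pos by simp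
  have "pia = pid"
    by (rule prob_space_eqI_conditionals[OF pa pd sets_eq E_sets Ebar_sets _ _ prior_E_eq _ _ condE condEbar])
      (use pos in \<open>auto simp: E_def Ebar_def\<close>)
  then show ?thesis
    using PID_le_of_same_prior[OF pid.sigma_finite_measure_axioms mu E_sets f_meas f_nonneg] c by simp
qed

end
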